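(* Let $h$ be a triangle center function. If the locus of $X_h$ over the 3-periodics of $E$ is an ellipse, then this ellipse is centered at the origin (the center of $E$) and its axes lie along the coordinate axes (the axes of $E$).
   Context: Fix real numbers $a>b>0$ and let $E$ be the ellipse $x^2/a^2+y^2/b^2=1$ (the elliptic billiard). A 3-periodic is a non-degenerate triangle $P_1P_2P_3$ with all vertices on $E$ such that at each vertex $P_j$ the normal line to $E$ at $P_j$ bisects the interior angle of the triangle at $P_j$. For a triangle $P_1P_2P_3$ let $s_1=|P_2P_3|$, $s_2=|P_3P_1|$, $s_3=|P_1P_2|$. A triangle center function is a function $h(x,y,z)$ that is homogeneous and bisymmetric ($h(x,y,z)=h(x,z,y)$). The associated triangle center is $X_h=\dfrac{p s_1P_1+q s_2P_2+r s_3P_3}{p s_1+q s_2+r s_3}$ with $p=h(s_1,s_2,s_3)$, $q=h(s_2,s_3,s_1)$, $r=h(s_3,s_1,s_2)$, defined when the denominator is nonzero. The locus of $X_h$ is the set of points $X_h(T)$ as $T$ ranges over all 3-periodics for which $X_h(T)$ is defined. *)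

theory Defs
  imports "HOL-Analysis.Analysis"
begin

type_synonym pt = "real \<times> real"

definition cross2 :: "pt \<Rightarrow> pt \<Rightarrow> real" where
  "cross2 u v = fst u * snd v - snd u * fst v"

definition len :: "pt \<Rightarrow> real" where
  "len u = sqrt ((fst u)\<^sup>2 + (snd u)\<^sup>2)"

definition on_ellipse :: "real \<Rightarrow> real \<Rightarrow> pt \<Rightarrow> bool" where
  "on_ellipse a b P \<longleftrightarrow> (fst P)\<^sup>2 / a\<^sup>2 + (snd P)\<^sup>2 / b\<^sup>2 = 1"

text \<open>Normal vector to the ellipse at P (gradient of the defining function, up to factor 2).\<close>
definition ell_normal :: "real \<Rightarrow> real \<Rightarrow> pt \<Rightarrow> pt" where
  "ell_normal a b P = (fst P / a\<^sup>2, snd P / b\<^sup>2)"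

text \<open>The normal line at Pj bisects the interior angle of the triangle at Pj, whose
  other vertices are Q1 and Q2: the interior bisector direction
  (Q1-Pj)/|Q1-Pj| + (Q2-Pj)/|Q2-Pj| is parallel to the normal.\<close>
definition normal_bisects :: "real \<Rightarrow> real \<Rightarrow> pt \<Rightarrow> pt \<Rightarrow> pt \<Rightarrow> bool" where
  "normal_bisects a b Pj Q1 Q2 \<longleftrightarrow>
     cross2 (ell_normal a b Pj)
       ((1 / len (Q1 - Pj)) *\<^sub>R (Q1 - Pj) + (1 / len (Q2 - Pj)) *\<^sub>R (Q2 - Pj)) = 0"

definition nondegenerate :: "pt \<Rightarrow> pt \<Rightarrow> pt \<Rightarrow> bool" where
  "nondegenerate P1 P2 P3 \<longleftrightarrow> cross2 (P2 - P1) (P3 - P1) \<noteq> 0"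

definition three_periodic :: "real \<Rightarrow> real \<Rightarrow> pt \<Rightarrow> pt \<Rightarrow> pt \<Rightarrow> bool" where
  "three_periodic a b P1 P2 P3 \<longleftrightarrow>
     nondegenerate P1 P2 P3 \<and>
     on_ellipse a b P1 \<and> on_ellipse a b P2 \<and> on_ellipse a b P3 \<and>
     normal_bisects a b P1 P2 P3 \<and> normal_bisects a b P2 P3 P1 \<and>
     normal_bisects a b P3 P1 P2"

definition triangle_center_function :: "(real \<Rightarrow> real \<Rightarrow> real \<Rightarrow> real) \<Rightarrow> bool" where
  "triangle_center_function h \<longleftrightarrow>
     (\<exists>k::real. \<forall>t>0. \<forall>x y z. h (t*x) (t*y) (t*z) = t powr k * h x y z) \<and>
     (\<forall>x y z. h x y z = h x z y)"

definition center_denom :: "(real \<Rightarrow> real \<Rightarrow> real \<Rightarrow> real) \<Rightarrow> pt \<Rightarrow> pt \<Rightarrow> pt \<Rightarrow> real" where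
  "center_denom h P1 P2 P3 =
     (let s1 = len (P3 - P2); s2 = len (P1 - P3); s3 = len (P2 - P1)
      in h s1 s2 s3 * s1 + h s2 s3 s1 * s2 + h s3 s1 s2 * s3)"

definition center_point :: "(real \<Rightarrow> real \<Rightarrow> real \<Rightarrow> real) \<Rightarrow> pt \<Rightarrow> pt \<Rightarrow> pt \<Rightarrow> pt" where
  "center_point h P1 P2 P3 =
     (let s1 = len (P3 - P2); s2 = len (P1 - P3); s3 = len (P2 - P1);
          p = h s1 s2 s3; q = h s2 s3 s1; r = h s3 s1 s2
      in (1 / (p * s1 + q * s2 + r * s3)) *\<^sub>R
           ((p * s1) *\<^sub>R P1 + (q * s2) *\<^sub>R P2 + (r * s3) *\<^sub>R P3))"

definition center_locus :: "real \<Rightarrow> real \<Rightarrow> (real \<Rightarrow> real \<Rightarrow> real \<Rightarrow> real) \<Rightarrow> pt set" where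
  "center_locus a b h =
     {X. \<exists>P1 P2 P3. three_periodic a b P1 P2 P3 \<and> center_denom h P1 P2 P3 \<noteq> 0 \<and>
                    X = center_point h P1 P2 P3}"

definition is_ellipse :: "pt set \<Rightarrow> bool" where
  "is_ellipse S \<longleftrightarrow> (\<exists>c::pt. \<exists>\<theta> p q::real. p > 0 \<and> q > 0 \<and>
     S = {c + (cos \<theta> * (p * cos t) - sin \<theta> * (q * sin t),
               sin \<theta> * (p * cos t) + cos \<theta> * (q * sin t)) | t. True})"

end

(*
  Reflections in the coordinate axes map 3-periodics to 3-periodics and commute with taking X_h,
  which depends only on the vertices and the side lengths; so the locus is invariant under both
  reflections and hence under z \<mapsto> -z. An ellipse with center c is also point-symmetric about c,
  so the locus is invariant under translation by 2c, which a bounded set only allows for c = 0.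
  Finally, the reflection x \<mapsto> -x preserves norms, so it maps an endpoint of the major axis of a
  centered non-circular ellipse to an endpoint of the major axis; hence that axis is a coordinate axis.
*)
theory Submission
  imports Defs
begin

definition axis_reflection :: "real \<Rightarrow> real \<Rightarrow> pt \<Rightarrow> pt" where
  "axis_reflection \<sigma> \<tau> P = (\<sigma> * fst P, \<tau> * snd P)"

lemma axis_reflection_diff:
  "axis_reflection \<sigma> \<tau> (u - v) = axis_reflection \<sigma> \<tau> u - axis_reflection \<sigma> \<tau> v"
  by (simp add: axis_reflection_def algebra_simps)

lemma axis_reflection_add:
  "axis_reflection \<sigma> \<tau> (u + v) = axis_reflection \<sigma> \<tau> u + axis_reflection \<sigma> \<tau> v"
  by (simp add: axis_reflection_def algebra_simps)

lemma axis_reflection_scaleR: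
  "axis_reflection \<sigma> \<tau> (c *\<^sub>R u) = c *\<^sub>R axis_reflection \<sigma> \<tau> u"
  by (simp add: axis_reflection_def)

lemmas axis_reflection_linear = axis_reflection_diff axis_reflection_add axis_reflection_scaleR

lemma len_eq_norm: "len u = norm u"
  by (cases u) (simp add: len_def norm_Pair)

lemma norm_axis_reflection:
  assumes "\<sigma>\<^sup>2 = 1" "\<tau>\<^sup>2 = 1"
  shows "norm (axis_reflection \<sigma> \<tau> u) = norm u"
  using assms by (cases u) (simp add: axis_reflection_def norm_Pair power_mult_distrib)

lemma len_axis_reflection:
  assumes "\<sigma>\<^sup>2 = 1" "\<tau>\<^sup>2 = 1"
  shows "len (axis_reflection \<sigma> \<tau> u) = len u"
  using assms by (simp add: len_eq_norm norm_axis_reflection)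

lemma cross2_axis_reflection:
  "cross2 (axis_reflection \<sigma> \<tau> u) (axis_reflection \<sigma> \<tau> v) = \<sigma> * \<tau> * cross2 u v"
  by (simp add: axis_reflection_def cross2_def algebra_simps)

lemma ell_normal_axis_reflection:
  "ell_normal a b (axis_reflection \<sigma> \<tau> P) = axis_reflection \<sigma> \<tau> (ell_normal a b P)"
  by (simp add: axis_reflection_def ell_normal_def)

lemma on_ellipse_axis_reflection:
  assumes "\<sigma>\<^sup>2 = 1" "\<tau>\<^sup>2 = 1"
  shows "on_ellipse a b (axis_reflection \<sigma> \<tau> P) \<longleftrightarrow> on_ellipse a b P"
  using assms by (simp add: axis_reflection_def on_ellipse_def power_mult_distrib)

lemma normal_bisects_axis_reflection:
  assumes "\<sigma>\<^sup>2 = 1" "\<tau>\<^sup>2 = 1"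
  shows "normal_bisects a b (axis_reflection \<sigma> \<tau> P) (axis_reflection \<sigma> \<tau> Q) (axis_reflection \<sigma> \<tau> R)
     \<longleftrightarrow> normal_bisects a b P Q R"
proof -
  have "\<sigma> * \<tau> \<noteq> 0" using assms by auto
  then show ?thesis
    using assms by (simp add: normal_bisects_def ell_normal_axis_reflection len_axis_reflection
        cross2_axis_reflection flip: axis_reflection_linear)
qed

lemma three_periodic_axis_reflection:
  assumes "\<sigma>\<^sup>2 = 1" "\<tau>\<^sup>2 = 1" "three_periodic a b P1 P2 P3"
  shows "three_periodic a b (axis_reflection \<sigma> \<tau> P1) (axis_reflection \<sigma> \<tau> P2) (axis_reflection \<sigma> \<tau> P3)"
proof -
  have "\<sigma> * \<tau> \<noteq> 0" using assms(1,2) by auto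
  then show ?thesis
    using assms by (simp add: three_periodic_def nondegenerate_def on_ellipse_axis_reflection
      normal_bisects_axis_reflection cross2_axis_reflection flip: axis_reflection_diff)
qed

lemma center_denom_axis_reflection:
  assumes "\<sigma>\<^sup>2 = 1" "\<tau>\<^sup>2 = 1"
  shows "center_denom h (axis_reflection \<sigma> \<tau> P1) (axis_reflection \<sigma> \<tau> P2) (axis_reflection \<sigma> \<tau> P3)
       = center_denom h P1 P2 P3"
  using assms by (simp add: center_denom_def len_axis_reflection flip: axis_reflection_diff)

lemma center_point_axis_reflection:
  assumes "\<sigma>\<^sup>2 = 1" "\<tau>\<^sup>2 = 1"
  shows "center_point h (axis_reflection \<sigma> \<tau> P1) (axis_reflection \<sigma> \<tau> P2) (axis_reflection \<sigma> \<tau> P3)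
       = axis_reflection \<sigma> \<tau> (center_point h P1 P2 P3)"
  using assms
  by (simp add: center_point_def Let_def len_axis_reflection axis_reflection_linear
      flip: axis_reflection_diff)

lemma center_locus_axis_reflection:
  assumes "\<sigma>\<^sup>2 = 1" "\<tau>\<^sup>2 = 1" "X \<in> center_locus a b h"
  shows "axis_reflection \<sigma> \<tau> X \<in> center_locus a b h"
proof -
  obtain P1 P2 P3 where "three_periodic a b P1 P2 P3" "center_denom h P1 P2 P3 \<noteq> 0"
    "X = center_point h P1 P2 P3"
    using assms(3) unfolding center_locus_def by blast
  with assms(1,2) show ?thesis
    unfolding center_locus_def mem_Collect_eq
    by (metis three_periodic_axis_reflection center_denom_axis_reflection
        center_point_axis_reflection)
qed

definition ellipse_point :: "pt \<Rightarrow> real \<Rightarrow> real \<Rightarrow> real \<Rightarrow> real \<Rightarrow> pt" where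
  "ellipse_point c \<theta> p q t =
     c + (cos \<theta> * (p * cos t) - sin \<theta> * (q * sin t), sin \<theta> * (p * cos t) + cos \<theta> * (q * sin t))"

lemma is_ellipse_iff_range_ellipse_point:
  "is_ellipse S \<longleftrightarrow> (\<exists>c \<theta> p q. p > 0 \<and> q > 0 \<and> S = range (ellipse_point c \<theta> p q))"
  unfolding is_ellipse_def ellipse_point_def by (simp add: full_SetCompr_eq)

lemma ellipse_point_translate: "ellipse_point c \<theta> p q t = c + ellipse_point 0 \<theta> p q t"
  by (simp add: ellipse_point_def)

lemma ellipse_point_add_pi: "ellipse_point 0 \<theta> p q (t + pi) = - ellipse_point 0 \<theta> p q t"
  by (simp add: ellipse_point_def)

lemma norm_ellipse_point_squared:
  "(norm (ellipse_point 0 \<theta> p q t))\<^sup>2 = (p * cos t)\<^sup>2 + (q * sin t)\<^sup>2"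
proof -
  have "(cos \<theta> * (p * cos t) - sin \<theta> * (q * sin t))\<^sup>2 + (sin \<theta> * (p * cos t) + cos \<theta> * (q * sin t))\<^sup>2
      = ((cos \<theta>)\<^sup>2 + (sin \<theta>)\<^sup>2) * ((p * cos t)\<^sup>2 + (q * sin t)\<^sup>2)"
    by algebra
  then show ?thesis by (simp add: ellipse_point_def norm_Pair)
qed

lemma norm_ellipse_point_le:
  assumes "p \<ge> 0" "q \<ge> 0"
  shows "norm (ellipse_point 0 \<theta> p q t) \<le> p + q"
proof (rule power2_le_imp_le)
  have "(cos t)\<^sup>2 \<le> 1" "(sin t)\<^sup>2 \<le> 1"
    using sin_cos_squared_add[of t] zero_le_power2[of "sin t"] zero_le_power2[of "cos t"] by linarith+
  then have "(p * cos t)\<^sup>2 \<le> p\<^sup>2" "(q * sin t)\<^sup>2 \<le> q\<^sup>2"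
    by (simp_all add: power_mult_distrib mult_left_le)
  then show "(norm (ellipse_point 0 \<theta> p q t))\<^sup>2 \<le> (p + q)\<^sup>2"
    using assms unfolding norm_ellipse_point_squared power2_sum by (simp add: add_mono add_increasing2)
qed (use assms in simp)

lemma bounded_range_ellipse_point:
  assumes "p \<ge> 0" "q \<ge> 0"
  shows "bounded (range (ellipse_point c \<theta> p q))"
  unfolding bounded_iff
proof (intro exI ballI)
  fix z assume "z \<in> range (ellipse_point c \<theta> p q)"
  then obtain t where "z = c + ellipse_point 0 \<theta> p q t"
    using ellipse_point_translate[of c] by auto
  then show "norm z \<le> norm c + (p + q)"
    using norm_triangle_le norm_ellipse_point_le[OF assms] by (metis add_left_mono)
qed

lemma bounded_translation_invariant_imp_zero:
  fixes v :: "'a::real_normed_vector"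
  assumes "bounded T" "x \<in> T" "\<And>z. z \<in> T \<Longrightarrow> z + v \<in> T"
  shows "v = 0"
proof -
  obtain B where B: "\<And>z. z \<in> T \<Longrightarrow> norm z \<le> B"
    using assms(1) unfolding bounded_iff by blast
  have orbit: "x + real n *\<^sub>R v \<in> T" for n
  proof (induction n)
    case 0
    show ?case using assms(2) by simp
  next
    case (Suc n)
    then have "(x + real n *\<^sub>R v) + v \<in> T" by (rule assms(3))
    then show ?case by (simp add: algebra_simps)
  qed
  have "real n * norm v \<le> B + B" for n
  proof -
    have "real n * norm v = norm ((x + real n *\<^sub>R v) - x)" by simp
    also have "\<dots> \<le> norm (x + real n *\<^sub>R v) + norm x" by (rule norm_triangle_ineq4)
    also have "\<dots> \<le> B + B" using B orbit assms(2) by (intro add_mono) auto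
    finally show ?thesis .
  qed
  then show "v = 0"
    by (metis reals_Archimedean3 not_le zero_less_norm_iff)
qed

lemma ellipse_center_eq_zero:
  assumes "p \<ge> 0" "q \<ge> 0"
    and neg: "\<And>z. z \<in> range (ellipse_point c \<theta> p q) \<Longrightarrow> - z \<in> range (ellipse_point c \<theta> p q)"
  shows "c = 0"
proof -
  \<comment> \<open>Point symmetry about c (shift by pi) followed by point symmetry about 0 translates by -2c.\<close>
  have "z - 2 *\<^sub>R c \<in> range (ellipse_point c \<theta> p q)" if z: "z \<in> range (ellipse_point c \<theta> p q)" for z
  proof -
    obtain t where t: "z = c + ellipse_point 0 \<theta> p q t"
      using z ellipse_point_translate[of c] by auto
    have "c - ellipse_point 0 \<theta> p q t = ellipse_point c \<theta> p q (t + pi)"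
      by (simp add: ellipse_point_translate[of c] ellipse_point_add_pi)
    then have "c - ellipse_point 0 \<theta> p q t \<in> range (ellipse_point c \<theta> p q)"
      by simp
    from neg[OF this] show ?thesis by (simp add: t scaleR_2 algebra_simps)
  qed
  then have "- (2 *\<^sub>R c) = 0"
    using bounded_translation_invariant_imp_zero[OF bounded_range_ellipse_point[OF assms(1,2)]]
    by (metis diff_conv_add_uminus rangeI)
  then show "c = 0" by simp
qed

lemma range_shift_argument: "range (\<lambda>t. f (t + d)) = range (f :: real \<Rightarrow> 'a)"
proof (intro equalityI subsetI)
  fix z assume "z \<in> range f"
  then obtain t where "z = f t" by blast
  then have "z = f ((t - d) + d)" by simp
  then show "z \<in> range (\<lambda>t. f (t + d))" by blast
qed auto

lemma range_ellipse_point_swap_axes: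
  "range (ellipse_point c \<theta> p q) = range (ellipse_point c (\<theta> + pi / 2) q p)"
proof -
  have "ellipse_point c \<theta> p q = (\<lambda>t. ellipse_point c (\<theta> + pi / 2) q p (t + - (pi / 2)))"
    by (simp add: fun_eq_iff ellipse_point_def cos_add sin_add cos_diff sin_diff algebra_simps
        flip: diff_conv_add_uminus)
  then show ?thesis by (simp only: range_shift_argument)
qed

lemma range_ellipse_point_circle:
  "range (ellipse_point c \<theta> p p) = range (ellipse_point c 0 p p)"
proof -
  have "ellipse_point c \<theta> p p = (\<lambda>t. ellipse_point c 0 p p (t + \<theta>))"
    by (simp add: fun_eq_iff ellipse_point_def cos_add sin_add algebra_simps)
  then show ?thesis by (simp only: range_shift_argument)
qed

lemma range_ellipse_point_sin_zero:
  assumes "sin \<theta> = 0"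
  shows "range (ellipse_point 0 \<theta> p q) = range (ellipse_point 0 0 p q)"
proof -
  have "cos \<theta> = 1 \<or> cos \<theta> = -1"
    using assms sin_cos_squared_add[of \<theta>] by (simp add: power2_eq_1_iff)
  then show ?thesis
  proof
    assume "cos \<theta> = 1"
    with assms show ?thesis by (simp add: ellipse_point_def)
  next
    assume "cos \<theta> = -1"
    with assms have "ellipse_point 0 \<theta> p q = (\<lambda>t. ellipse_point 0 0 p q (t + pi))"
      by (simp add: fun_eq_iff ellipse_point_def)
    then show ?thesis by (simp only: range_shift_argument)
  qed
qed

lemma range_ellipse_point_standard:
  assumes "p > 0" "q > 0"
  shows "range (ellipse_point 0 0 p q) = {(x, y). x\<^sup>2 / p\<^sup>2 + y\<^sup>2 / q\<^sup>2 = 1}"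
proof (intro equalityI subsetI)
  fix z assume "z \<in> range (ellipse_point 0 0 p q)"
  then show "z \<in> {(x, y). x\<^sup>2 / p\<^sup>2 + y\<^sup>2 / q\<^sup>2 = 1}"
    using assms by (auto simp: ellipse_point_def power_mult_distrib)
next
  fix z assume "z \<in> {(x, y). x\<^sup>2 / p\<^sup>2 + y\<^sup>2 / q\<^sup>2 = 1}"
  then obtain x y where z: "z = (x, y)" and "(x / p)\<^sup>2 + (y / q)\<^sup>2 = 1"
    by (auto simp: power_divide)
  then obtain t where "x / p = cos t" "y / q = sin t"
    using sincos_total_2pi by metis
  then have "z = ellipse_point 0 0 p q t"
    using assms by (simp add: z ellipse_point_def field_simps)
  then show "z \<in> range (ellipse_point 0 0 p q)" by simp
qed

lemma rotated_ellipse_reflection_symmetric_imp_aligned: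
  assumes "0 < q" "q < p"
    and refl: "axis_reflection (-1) 1 (ellipse_point 0 \<theta> p q 0) \<in> range (ellipse_point 0 \<theta> p q)"
  shows "sin \<theta> = 0 \<or> cos \<theta> = 0"
proof -
  define z where "z = ellipse_point 0 \<theta> p q 0"
  obtain t where t: "axis_reflection (-1) 1 z = ellipse_point 0 \<theta> p q t"
    using refl unfolding z_def by blast
  \<comment> \<open>The reflected vertex still has norm p, which only the two vertices on the major axis have.\<close>
  have "norm (ellipse_point 0 \<theta> p q t) = norm z"
    using norm_axis_reflection[of "-1" 1 z] by (simp add: t)
  then have "p\<^sup>2 = (p * cos t)\<^sup>2 + (q * sin t)\<^sup>2"
    using norm_ellipse_point_squared[of \<theta> p q 0] norm_ellipse_point_squared[of \<theta> p q t]
    by (simp add: z_def)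
  moreover have "(cos t)\<^sup>2 = 1 - (sin t)\<^sup>2" by (simp add: cos_squared_eq)
  ultimately have "(sin t)\<^sup>2 * (p\<^sup>2 - q\<^sup>2) = 0" by (simp add: algebra_simps)
  moreover have "q\<^sup>2 < p\<^sup>2" using assms by (simp add: power_strict_mono)
  ultimately have "sin t = 0" by simp
  then have "cos t = 1 \<or> cos t = -1"
    using sin_cos_squared_add[of t] by (simp add: power2_eq_1_iff)
  moreover have "(- (cos \<theta> * p), sin \<theta> * p) = cos t *\<^sub>R (cos \<theta> * p, sin \<theta> * p)"
    using t \<open>sin t = 0\<close> by (simp add: z_def ellipse_point_def axis_reflection_def)
  ultimately have "cos \<theta> * p = 0 \<or> sin \<theta> * p = 0"
    by auto
  then show ?thesis
    using assms by auto
qed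

lemma axis_symmetric_ellipse_is_standard:
  assumes "is_ellipse S"
    and symmetric: "\<And>\<sigma> \<tau> z. \<sigma>\<^sup>2 = 1 \<Longrightarrow> \<tau>\<^sup>2 = 1 \<Longrightarrow> z \<in> S \<Longrightarrow> axis_reflection \<sigma> \<tau> z \<in> S"
  shows "\<exists>\<alpha> \<beta>. \<alpha> > 0 \<and> \<beta> > 0 \<and> S = {(x, y). x\<^sup>2 / \<alpha>\<^sup>2 + y\<^sup>2 / \<beta>\<^sup>2 = 1}"
proof -
  obtain c \<theta>\<^sub>0 p\<^sub>0 q\<^sub>0 where pq: "p\<^sub>0 > 0" "q\<^sub>0 > 0" and S: "S = range (ellipse_point c \<theta>\<^sub>0 p\<^sub>0 q\<^sub>0)"
    using assms(1) unfolding is_ellipse_iff_range_ellipse_point by blast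
  have "c = 0"
  proof (rule ellipse_center_eq_zero)
    show "- z \<in> range (ellipse_point c \<theta>\<^sub>0 p\<^sub>0 q\<^sub>0)" if "z \<in> range (ellipse_point c \<theta>\<^sub>0 p\<^sub>0 q\<^sub>0)" for z
      using symmetric[of "-1" "-1" z] that unfolding S by (cases z) (simp add: axis_reflection_def)
  qed (use pq in auto)
  obtain \<theta> p q where q: "0 < q" "q \<le> p" and S: "S = range (ellipse_point 0 \<theta> p q)"
  proof (cases "q\<^sub>0 \<le> p\<^sub>0")
    case True
    show ?thesis by (rule that[of q\<^sub>0 p\<^sub>0 \<theta>\<^sub>0]) (use True pq S \<open>c = 0\<close> in auto)
  next
    case False
    show ?thesis
      by (rule that[of p\<^sub>0 q\<^sub>0 "\<theta>\<^sub>0 + pi / 2"])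
        (use False pq S \<open>c = 0\<close> range_ellipse_point_swap_axes in auto)
  qed
  have reflected: "axis_reflection (-1) 1 (ellipse_point 0 \<theta> p q 0) \<in> range (ellipse_point 0 \<theta> p q)"
    using symmetric[of "-1" 1] unfolding S by simp
  have "S = range (ellipse_point 0 0 p q) \<or> S = range (ellipse_point 0 0 q p)"
  proof (cases "p = q")
    case True
    then show ?thesis using range_ellipse_point_circle unfolding S by simp
  next
    case False
    with q have "sin \<theta> = 0 \<or> cos \<theta> = 0"
      using rotated_ellipse_reflection_symmetric_imp_aligned[OF _ _ reflected] by simp
    moreover have "sin (\<theta> + pi / 2) = cos \<theta>" by (simp add: sin_add)
    ultimately show ?thesis
      using range_ellipse_point_sin_zero range_ellipse_point_swap_axes unfolding S by metis
  qed
  moreover have "p > 0" using q by simp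
  ultimately obtain \<alpha> \<beta> where "\<alpha> > 0" "\<beta> > 0" "S = range (ellipse_point 0 0 \<alpha> \<beta>)"
    using q by blast
  then show ?thesis
    by (intro exI[of _ \<alpha>] exI[of _ \<beta>]) (simp add: range_ellipse_point_standard)
qed

theorem lemma3:
  fixes a b :: real and h :: "real \<Rightarrow> real \<Rightarrow> real \<Rightarrow> real"
  assumes "a > b" and "b > 0"
    and "triangle_center_function h"
    and "is_ellipse (center_locus a b h)"
  shows "\<exists>\<alpha> \<beta>::real. \<alpha> > 0 \<and> \<beta> > 0 \<and>
           center_locus a b h = {(x, y). x\<^sup>2 / \<alpha>\<^sup>2 + y\<^sup>2 / \<beta>\<^sup>2 = 1}"
  using assms(4) center_locus_axis_reflection by (rule axis_symmetric_ellipse_is_standard)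

end
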